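(* Let $c \in \mathbb{Z}$ and $f_c(x) = x^2+c$. If $-c$ is not a square in $\mathbb{Z}$, then $f_c(f_c(x)) = x^4 + 2cx^2 + c^2 + c$ is irreducible over $\mathbb{Q}$. If $-c$ is a square in $\mathbb{Z}$ and $c \neq 0, -1$, then writing $c = -b^2$ with $b \in \mathbb{Z}$ we have $f_c(f_c(x)) = (x^2 - (b^2 - b))(x^2 - (b^2+b))$, where each of the two quadratic factors is irreducible over $\mathbb{Q}$. *)

theory Defs
  imports "HOL-Computational_Algebra.Polynomial_Factorial"
begin

definition fpoly :: "int \<Rightarrow> rat poly" where
  "fpoly c = [:rat_of_int c, 0, 1:]"

end

theory Submission
  imports Defs
begin

text \<open>
  A rational root x of f_c(f_c(x)) would give (x^2 + c)^2 = -c, so -c would be the square of a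
  rational and hence of an integer. Without roots, a factorisation of the monic quartic must be a
  product of two monic quadratics, and comparing coefficients of x^4 + 2cx^2 + c^2 + c leaves two
  possibilities: either the linear coefficients vanish, and the difference of the constant terms
  squares to -4c, or the constant terms agree and square to c^2 + c. The first again makes -c a
  square; in the second c(c+1) is a square, which among integers forces c = 0 or c = -1, where -c is
  a square as well. When c = -b^2 the factors x^2 - (b^2 \<mp> b) are irreducible because
  b^2 \<mp> b = (\<mp>b)(\<mp>b + 1) is not a square unless b \<in> {0, 1, -1}.
\<close>

lemma square_plus_self_eq_square_int:
  fixes c k :: int
  assumes "c^2 + c = k^2"
  shows "c = 0 \<or> c = -1"
proof -
  have "(2*c + 1 - 2*k) * (2*c + 1 + 2*k) = 1"
    using assms by (simp add: power2_eq_square algebra_simps)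
  then have "2*c + 1 = 1 \<or> 2*c + 1 = -1"
    unfolding zmult_eq_1_iff by auto
  then show ?thesis by auto
qed

lemma rat_power_eq_of_int_imp_int_power:
  fixes q :: rat and n :: int
  assumes "q ^ k = of_int n" and "k > 0"
  shows "\<exists>m::int. n = m ^ k"
proof -
  obtain a b where ab: "quotient_of q = (a, b)" by (cases "quotient_of q")
  have q: "q = of_int a / of_int b" and "b > 0" and "coprime a b"
    using ab quotient_of_div quotient_of_denom_pos quotient_of_coprime by auto
  have "of_int (a ^ k) = (of_int (n * b ^ k) :: rat)"
    using assms \<open>b > 0\<close> by (simp add: q power_divide field_simps)
  then have a_pow: "a ^ k = n * b ^ k"
    by (simp only: of_int_eq_iff)
  have "b ^ k dvd a ^ k" using a_pow by simp
  moreover have "coprime (b ^ k) (a ^ k)" using \<open>coprime a b\<close> by (simp add: coprime_commute)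
  ultimately have "is_unit (b ^ k)" using coprime_absorb_left by blast
  moreover have "b dvd b ^ k"
    using \<open>k > 0\<close> by (simp add: dvd_power)
  ultimately have "is_unit b" by (rule dvd_unit_imp_unit[rotated])
  then have "b = 1"
    using \<open>b > 0\<close> by simp
  with a_pow have "n = a ^ k" by simp
  then show ?thesis ..
qed

lemma poly_degree_1_has_root:
  fixes q :: "'a :: field poly"
  assumes "degree q = 1"
  shows "\<exists>x. poly q x = 0"
proof -
  obtain a b where "q = [:b, a:]" "a \<noteq> 0"
    using degree1_coeffs[OF assms] by metis
  then have "poly q (- b / a) = 0" by simp
  then show ?thesis ..
qed

lemma reducible_polyE:
  fixes p :: "'a :: field poly"
  assumes "\<not> irreducible p" and "degree p > 0"
  obtains q r where "p = q * r" "degree q > 0" "degree r > 0"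
proof -
  have "p \<noteq> 0" using assms(2) by auto
  then have "\<not> p dvd 1" using assms(2) by (simp add: is_unit_iff_degree)
  with assms(1) \<open>p \<noteq> 0\<close> obtain q r where qr: "p = q * r" "\<not> q dvd 1" "\<not> r dvd 1"
    unfolding irreducible_def by blast
  with \<open>p \<noteq> 0\<close> have "q \<noteq> 0" "r \<noteq> 0" by auto
  with qr show ?thesis
    using that by (auto simp: is_unit_iff_degree)
qed

lemma factor_of_rootless_poly_degree_ne_1:
  fixes p :: "'a :: field poly"
  assumes "p = q * r" and "\<And>x. poly p x \<noteq> 0"
  shows "degree q \<noteq> 1"
  using assms poly_degree_1_has_root by fastforce

lemma irreducible_quadratic_if_no_root:
  fixes p :: "'a :: field poly"
  assumes "degree p = 2" and "\<And>x. poly p x \<noteq> 0"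
  shows "irreducible p"
proof (rule ccontr)
  assume "\<not> irreducible p"
  moreover have "degree p > 0" using assms(1) by simp
  ultimately obtain q r where p: "p = q * r" and "degree q > 0" "degree r > 0"
    by (rule reducible_polyE)
  then have "q \<noteq> 0" "r \<noteq> 0" by auto
  then have "degree q + degree r = 2"
    using assms(1) by (simp add: p degree_mult_eq)
  with \<open>degree q > 0\<close> \<open>degree r > 0\<close> have "degree q = 1" by linarith
  with factor_of_rootless_poly_degree_ne_1[OF p assms(2)] show False by blast
qed

lemma monic_quadratic_eq:
  fixes q :: "'a :: zero_neq_one poly"
  assumes "degree q = 2" and "lead_coeff q = 1"
  shows "q = [:coeff q 0, coeff q 1, 1:]"
proof -
  obtain a b c where "q = [:c, b, a:]" "a \<noteq> 0"
    using degree2_coeffs[OF assms(1)] by metis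
  with assms(2) show ?thesis by simp
qed

lemma monic_quadratic_factors:
  fixes p :: "'a :: field poly"
  assumes "p = q * r" and "degree q = 2" and "degree r = 2" and "lead_coeff p = 1"
  obtains p0 u q0 v where "p = [:p0, u, 1:] * [:q0, v, 1:]"
proof -
  define l where "l = lead_coeff q"
  have "q \<noteq> 0" using assms(2) by auto
  then have "l \<noteq> 0" by (simp add: l_def)
  define q' r' where "q' = smult (inverse l) q" and "r' = smult l r"
  have p: "p = q' * r'"
    using \<open>l \<noteq> 0\<close> assms(1) by (simp add: q'_def r'_def)
  have "degree q' = 2" "degree r' = 2" "lead_coeff q' = 1"
    using \<open>l \<noteq> 0\<close> assms(2,3) by (simp_all add: q'_def r'_def l_def)
  moreover have "lead_coeff r' = 1"
    using assms(4) \<open>lead_coeff q' = 1\<close> by (simp add: p lead_coeff_mult)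
  ultimately show ?thesis
    using that p monic_quadratic_eq by metis
qed

lemma biquadratic_monic_factorization:
  fixes A B p u q v :: "'a :: idom"
  assumes "[:B, 0, A, 0, 1:] = [:p, u, 1:] * [:q, v, 1:]"
  shows "(p - q)^2 = A^2 - 4 * B \<or> p^2 = B"
proof -
  have B: "B = p * q" and "0 = p * v + u * q" and A: "A = p + u * v + q" and "0 = u + v"
    using assms by (simp_all add: algebra_simps)
  then have "u * (q - p) = 0" by (simp add: algebra_simps add_eq_0_iff)
  then consider "u = 0" | "q = p" by auto
  then show ?thesis
  proof cases
    case 1
    then have "A = p + q" using A by simp
    then show ?thesis using B by (simp add: power2_eq_square algebra_simps)
  next
    case 2
    then show ?thesis using B by (simp add: power2_eq_square)
  qed
qed

lemma rootless_quartic_reducible_imp_quadratic_factors: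
  fixes p :: "'a :: field poly"
  assumes "degree p = 4" and "lead_coeff p = 1" and "\<And>x. poly p x \<noteq> 0" and "\<not> irreducible p"
  obtains p0 u q0 v where "p = [:p0, u, 1:] * [:q0, v, 1:]"
proof -
  have "degree p > 0" using assms(1) by simp
  with assms(4) obtain q r where p: "p = q * r" and "degree q > 0" "degree r > 0"
    by (rule reducible_polyE)
  then have "q \<noteq> 0" "r \<noteq> 0" by auto
  then have "degree q + degree r = 4"
    using assms(1) by (simp add: p degree_mult_eq)
  moreover have "degree q \<noteq> 1"
    using p assms(3) by (rule factor_of_rootless_poly_degree_ne_1)
  moreover have "degree r \<noteq> 1"
    using p assms(3) by (intro factor_of_rootless_poly_degree_ne_1[of p r q]) (simp_all add: mult.commute)
  ultimately have "degree q = 2" "degree r = 2"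
    using \<open>degree q > 0\<close> \<open>degree r > 0\<close> by linarith+
  then show ?thesis
    by (rule monic_quadratic_factors[OF p _ _ assms(2) that])
qed

lemma irreducible_X2_minus_nonsquare:
  fixes r :: int
  assumes "\<not> (\<exists>k. r = k^2)"
  shows "irreducible [:- rat_of_int r, 0, 1:]"
proof (rule irreducible_quadratic_if_no_root)
  fix x :: rat
  show "poly [:- rat_of_int r, 0, 1:] x \<noteq> 0"
  proof
    assume "poly [:- rat_of_int r, 0, 1:] x = 0"
    then have "x^2 = of_int r" by (simp add: power2_eq_square)
    with assms show False
      using rat_power_eq_of_int_imp_int_power[OF _ pos2] by blast
  qed
qed simp

lemma fpoly_pcompose_fpoly:
  "pcompose (fpoly c) (fpoly c) = [:rat_of_int (c^2 + c), 0, rat_of_int (2*c), 0, 1:]"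
  by (simp add: fpoly_def pcompose_pCons power2_eq_square algebra_simps)

lemma irreducible_fpoly_pcompose_fpoly:
  fixes c :: int
  assumes nonsquare: "\<not> (\<exists>b. -c = b^2)"
  shows "irreducible (pcompose (fpoly c) (fpoly c))"
proof (rule ccontr)
  let ?P = "[:rat_of_int (c^2 + c), 0, rat_of_int (2*c), 0, 1:]"
  have rat_nonsquare: "y^2 \<noteq> of_int (-c)" for y :: rat
    using rat_power_eq_of_int_imp_int_power[OF _ pos2] nonsquare by blast
  have rootless: "poly ?P x \<noteq> 0" for x
  proof
    assume "poly ?P x = 0"
    then have "(x^2 + of_int c)^2 = of_int (-c)" by (simp add: power2_eq_square algebra_simps)
    with rat_nonsquare show False by blast
  qed
  assume "\<not> irreducible (pcompose (fpoly c) (fpoly c))"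
  then have "\<not> irreducible ?P" unfolding fpoly_pcompose_fpoly .
  moreover have "degree ?P = 4" "lead_coeff ?P = 1" by simp_all
  ultimately obtain p0 u q0 v where "?P = [:p0, u, 1:] * [:q0, v, 1:]"
    using rootless rootless_quartic_reducible_imp_quadratic_factors by metis
  then consider "(p0 - q0)^2 = (of_int (2*c))^2 - 4 * of_int (c^2 + c)" | "p0^2 = of_int (c^2 + c)"
    using biquadratic_monic_factorization by blast
  then show False
  proof cases
    case 1
    then have "((p0 - q0) / 2)^2 = of_int (-c)" by (simp add: power_divide power2_eq_square algebra_simps)
    with rat_nonsquare show False by blast
  next
    case 2
    then obtain k where "c^2 + c = k^2"
      using rat_power_eq_of_int_imp_int_power[OF _ pos2] by blast
    then have "c = 0 \<or> c = -1" by (rule square_plus_self_eq_square_int)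
    then have "-c = (if c = 0 then 0 else 1)^2" by auto
    with nonsquare show False by blast
  qed
qed

theorem proposition2p1:
  fixes c :: int
  shows "pcompose (fpoly c) (fpoly c)
           = [:rat_of_int (c^2 + c), 0, rat_of_int (2*c), 0, 1:]
       \<and> ((\<not> (\<exists>b::int. -c = b^2)) \<longrightarrow> irreducible (pcompose (fpoly c) (fpoly c)))
       \<and> (\<forall>b::int. c = -(b^2) \<and> c \<noteq> 0 \<and> c \<noteq> -1 \<longrightarrow>
            pcompose (fpoly c) (fpoly c)
              = [:- rat_of_int (b^2 - b), 0, 1:] * [:- rat_of_int (b^2 + b), 0, 1:]
            \<and> irreducible [:- rat_of_int (b^2 - b), 0, 1:]
            \<and> irreducible [:- rat_of_int (b^2 + b), 0, 1:])"
proof (intro conjI impI allI)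
  show "pcompose (fpoly c) (fpoly c) = [:rat_of_int (c^2 + c), 0, rat_of_int (2*c), 0, 1:]"
    by (rule fpoly_pcompose_fpoly)
  show "irreducible (pcompose (fpoly c) (fpoly c))" if "\<not> (\<exists>b::int. -c = b^2)"
    using that by (rule irreducible_fpoly_pcompose_fpoly)
  have pronic_nonsquare: "\<not> (\<exists>k. d^2 + d = k^2)" if "d \<noteq> 0" "d \<noteq> -1" for d :: int
    using square_plus_self_eq_square_int that by blast
  fix b :: int
  assume "c = -(b^2) \<and> c \<noteq> 0 \<and> c \<noteq> -1"
  then have c: "c = -(b^2)" and "b \<noteq> 0" "b \<noteq> 1" "b \<noteq> -1" by auto
  have "pcompose (fpoly c) (fpoly c) = [:rat_of_int (c^2 + c), 0, rat_of_int (2*c), 0, 1:]"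
    by (rule fpoly_pcompose_fpoly)
  also have "\<dots> = [:- rat_of_int (b^2 - b), 0, 1:] * [:- rat_of_int (b^2 + b), 0, 1:]"
    using c by (simp add: power2_eq_square algebra_simps)
  finally show "pcompose (fpoly c) (fpoly c) = [:- rat_of_int (b^2 - b), 0, 1:] * [:- rat_of_int (b^2 + b), 0, 1:]" .
  have "\<not> (\<exists>k. b^2 - b = k^2)"
    using pronic_nonsquare[of "-b"] \<open>b \<noteq> 0\<close> \<open>b \<noteq> 1\<close> by simp
  then show "irreducible [:- rat_of_int (b^2 - b), 0, 1:]"
    by (rule irreducible_X2_minus_nonsquare)
  have "\<not> (\<exists>k. b^2 + b = k^2)"
    using pronic_nonsquare[of b] \<open>b \<noteq> 0\<close> \<open>b \<noteq> -1\<close> by simp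
  then show "irreducible [:- rat_of_int (b^2 + b), 0, 1:]"
    by (rule irreducible_X2_minus_nonsquare)
qed

end
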